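(* Let $r$ be a parameter and let $eF_r=(e_{n,k})_{n,k\ge0}$ be the $f$-matrix of the exponential Riordan array $\left[e^x, x(1+rx/2)\right]$, i.e. $eF_r=\left[e^x,x(1+rx/2)\right]\cdot\left[e^x,x\right]=\left[e^{2x+rx^2/2},x(1+rx/2)\right]$. Then the ordinary generating function (in $x$ and $y$) of the reversal of $eF_r$, $$\sum_{n\ge0}\sum_{k=0}^n e_{n,n-k}\,x^ny^k,$$ is given by the continued fraction $$\cfrac{1}{1-(2y+1)x- \cfrac{ry(y+1)x^2}{1-(2y+1)x- \cfrac{2ry(y+1)x^2}{1-(2y+1)x- \cfrac{3ry(y+1)x^2}{1-\cdots}}}},$$ that is, the Jacobi continued fraction whose $n$-th level has linear coefficient $2y+1$ and whose $n$-th quadratic coefficient is $n\,ry(y+1)$ ($n=1,2,3,\ldots$).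
   Context: An exponential Riordan array $[g(x),f(x)]$, where $g(x)=1+g_1\frac{x}{1!}+g_2\frac{x^2}{2!}+\cdots$ and $f(x)=\frac{x}{1!}+f_2\frac{x^2}{2!}+\cdots$, is the lower-triangular matrix $(a_{n,k})_{n,k\ge0}$ with $a_{n,k}=\frac{n!}{k!}[x^n]g(x)f(x)^k$; equivalently its bivariate generating function $\sum_{n,k}a_{n,k}\frac{x^n}{n!}y^k$ equals $g(x)e^{yf(x)}$. Products are matrix products; $[e^x,x]$ is the binomial matrix $\left(\binom{n}{k}\right)$. The $f$-matrix of a Pascal-like matrix $M$ is $M\cdot[e^x,x]$. The reversal of a lower-triangular matrix $(a_{n,k})$ has $(n,k)$ entry $a_{n,n-k}$ for $0\le k\le n$. A Jacobi continued fraction $\mathcal{J}(\alpha_1,\alpha_2,\ldots;\beta_1,\beta_2,\ldots)$ denotes the formal power series $\cfrac{1}{1-\alpha_1x-\cfrac{\beta_1x^2}{1-\alpha_2x-\cfrac{\beta_2x^2}{1-\cdots}}}$. *)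

theory Defs
  imports "HOL-Computational_Algebra.Formal_Power_Series"
begin

definition eRiordan :: "'a::field_char_0 fps \<Rightarrow> 'a fps \<Rightarrow> nat \<Rightarrow> nat \<Rightarrow> 'a" where
  "eRiordan g f n k = fact n / fact k * fps_nth (g * f ^ k) n"

definition ltmat_mult :: "(nat \<Rightarrow> nat \<Rightarrow> 'a::comm_semiring_1) \<Rightarrow> (nat \<Rightarrow> nat \<Rightarrow> 'a) \<Rightarrow> nat \<Rightarrow> nat \<Rightarrow> 'a" where
  "ltmat_mult A B n k = (\<Sum>j\<le>n. A n j * B j k)"

definition f_matrix :: "(nat \<Rightarrow> nat \<Rightarrow> 'a::field_char_0) \<Rightarrow> nat \<Rightarrow> nat \<Rightarrow> 'a" where
  "f_matrix M = ltmat_mult M (eRiordan (fps_exp 1) fps_X)"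

definition reversal :: "(nat \<Rightarrow> nat \<Rightarrow> 'a::zero) \<Rightarrow> nat \<Rightarrow> nat \<Rightarrow> 'a" where
  "reversal M n k = (if k \<le> n then M n (n - k) else 0)"

text \<open>Convergents of the Jacobi continued fraction J(alpha_1,...; beta_1,...):
  jfrac_tail alpha beta N i is the fraction starting at level i, truncated after N levels.\<close>
fun jfrac_tail :: "(nat \<Rightarrow> 'a::field) \<Rightarrow> (nat \<Rightarrow> 'a) \<Rightarrow> nat \<Rightarrow> nat \<Rightarrow> 'a fps" where
  "jfrac_tail \<alpha> \<beta> 0 i = 0"
| "jfrac_tail \<alpha> \<beta> (Suc N) i =
     inverse (1 - fps_const (\<alpha> i) * fps_X - fps_const (\<beta> i) * fps_X ^ 2 * jfrac_tail \<alpha> \<beta> N (Suc i))"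

definition jfrac_conv :: "(nat \<Rightarrow> 'a::field) \<Rightarrow> (nat \<Rightarrow> 'a) \<Rightarrow> nat \<Rightarrow> 'a fps" where
  "jfrac_conv \<alpha> \<beta> N = jfrac_tail \<alpha> \<beta> N 1"

text \<open>F is the value of the J-fraction: the convergents tend to F in the x-adic topology.\<close>
definition is_jfrac :: "(nat \<Rightarrow> 'a::field) \<Rightarrow> (nat \<Rightarrow> 'a) \<Rightarrow> 'a fps \<Rightarrow> bool" where
  "is_jfrac \<alpha> \<beta> F \<longleftrightarrow> (jfrac_conv \<alpha> \<beta> \<longlonglongrightarrow> F)"

end

theory Submission
  imports Defs
begin

text \<open>Since \<open>f = x + r x^2/2\<close> has no constant term, the f-matrix \<open>[e^x, f] \<cdot> [e^x, x]\<close> is the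
  exponential Riordan array \<open>[G, f]\<close> with \<open>G = e^x e^f\<close>. Both \<open>G'/G = 2 + r x\<close> and \<open>f' = 1 + r x\<close>
  are linear, so differentiating the columns \<open>G f^k/k!\<close> gives a four-term recurrence for the
  entries, which for the reversed row polynomials reads
  \<open>R (n+1) = (2y + 1) R n + n r y (y + 1) R (n-1)\<close>, \<open>R 0 = 1\<close>.

  Any sequence with \<open>h 0 = 1\<close> and \<open>h (n+1) = a h n + n b h (n-1)\<close> has the J-fraction with
  \<open>\<alpha>\<^sub>i = a\<close>, \<open>\<beta>\<^sub>i = i b\<close>: the series \<open>E\<^sub>j = \<Sum> C(m+j-1, m) h m x^m\<close> satisfy
  \<open>E\<^sub>j = (1 - a x) E\<^sub>j\<^sub>+\<^sub>1 - (j+1) b x^2 E\<^sub>j\<^sub>+\<^sub>2\<close>, so the ratios \<open>E\<^sub>j\<^sub>+\<^sub>1 / E\<^sub>j\<close> obey the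
  continued-fraction recursion at every level, and the convergents agree with
  \<open>E\<^sub>1 / E\<^sub>0 = \<Sum> h n x^n\<close> to ever higher order.\<close>

unbundle fps_syntax

lemma fps_inverse_nth_cong:
  fixes f g :: "'a::field fps"
  assumes "f $ 0 \<noteq> 0" and "\<And>k. k < n \<Longrightarrow> f $ k = g $ k" and "m < n"
  shows "inverse f $ m = inverse g $ m"
proof -
  have cutoff_eq: "fps_cutoff n f = fps_cutoff n g"
    using assms(2) by (simp add: fps_cutoff_eq_fps_cutoff_iff)
  have "g $ 0 \<noteq> 0"
    using assms by auto
  then have "fps_cutoff n (inverse f) = fps_cutoff n (inverse g)"
    by (metis assms(1) cutoff_eq fps_cutoff_inverse)
  then show ?thesis
    using assms(3) by (simp add: fps_cutoff_eq_fps_cutoff_iff)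
qed

text \<open>The Hadamard product of \<open>\<Sum> h m x^m\<close> with \<open>(1 - x)^-j\<close>. For \<open>j = 0\<close> the truncated
  subtraction \<open>m + j - 1\<close> still gives the coefficients of \<open>1\<close>.\<close>
definition binom_weighted_fps :: "(nat \<Rightarrow> 'a::comm_semiring_1) \<Rightarrow> nat \<Rightarrow> 'a fps" where
  "binom_weighted_fps h j = Abs_fps (\<lambda>m. of_nat ((m + j - 1) choose m) * h m)"

lemma binom_weighted_fps_nth_0 [simp]: "binom_weighted_fps h j $ 0 = h 0"
  by (simp add: binom_weighted_fps_def)

lemma binom_weighted_fps_0: "h 0 = 1 \<Longrightarrow> binom_weighted_fps h 0 = 1"
  by (auto simp: binom_weighted_fps_def fps_eq_iff binomial_eq_0)

lemma binom_weighted_fps_1: "binom_weighted_fps h (Suc 0) = Abs_fps h"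
  by (simp add: binom_weighted_fps_def)

lemma binom_weighted_fps_Suc_diff:
  fixes h :: "nat \<Rightarrow> 'a::comm_ring_1"
  shows "binom_weighted_fps h (Suc j) - binom_weighted_fps h j =
           fps_X * binom_weighted_fps (\<lambda>m. h (Suc m)) (Suc j)"
proof (rule fps_ext)
  fix m
  show "(binom_weighted_fps h (Suc j) - binom_weighted_fps h j) $ m =
          (fps_X * binom_weighted_fps (\<lambda>m. h (Suc m)) (Suc j)) $ m"
  proof (cases m)
    case (Suc k)
    have "Suc k + j choose Suc k = (k + j choose Suc k) + (k + j choose k)"
      by simp
    then show ?thesis
      using Suc by (simp add: binom_weighted_fps_def algebra_simps)
  qed (simp add: binom_weighted_fps_def)
qed

lemma binom_weighted_fps_shift:
  fixes h :: "nat \<Rightarrow> 'a::comm_ring_1"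
  assumes rec: "\<And>n. h (Suc n) = a * h n + of_nat n * b * h (n - 1)"
  shows "binom_weighted_fps (\<lambda>m. h (Suc m)) (Suc j) =
           fps_const a * binom_weighted_fps h (Suc j)
           + fps_const (of_nat (Suc j) * b) * fps_X * binom_weighted_fps h (Suc (Suc j))"
proof (rule fps_ext)
  fix m
  have absorb: "of_nat m * of_nat (m + j choose m) =
                  (of_nat (Suc j) * of_nat (m + j choose (m - 1)) :: 'a)"
    if pos: "m > 0"
  proof -
    obtain k where "m = Suc k"
      using pos by (cases m) auto
    then show ?thesis
      using Suc_times_binomial_add[of k j] by (metis add_Suc diff_Suc_1 of_nat_mult)
  qed
  have "binom_weighted_fps (\<lambda>m. h (Suc m)) (Suc j) $ m = of_nat (m + j choose m) * h (Suc m)"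
    by (simp add: binom_weighted_fps_def)
  also have "\<dots> = a * (of_nat (m + j choose m) * h m)
                   + of_nat m * of_nat (m + j choose m) * b * h (m - 1)"
    by (subst rec) (simp add: algebra_simps)
  also have "\<dots> = (fps_const a * binom_weighted_fps h (Suc j)
           + fps_const (of_nat (Suc j) * b) * fps_X * binom_weighted_fps h (Suc (Suc j))) $ m"
    by (cases "m = 0") (simp_all add: binom_weighted_fps_def mult.assoc absorb)
  finally show "binom_weighted_fps (\<lambda>m. h (Suc m)) (Suc j) $ m = \<dots>" .
qed

lemma binom_weighted_fps_rec:
  fixes h :: "nat \<Rightarrow> 'a::comm_ring_1"
  assumes "\<And>n. h (Suc n) = a * h n + of_nat n * b * h (n - 1)"
  shows "binom_weighted_fps h j =
           (1 - fps_const a * fps_X) * binom_weighted_fps h (Suc j)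
           - fps_const (of_nat (Suc j) * b) * fps_X^2 * binom_weighted_fps h (Suc (Suc j))"
proof -
  have "binom_weighted_fps h j =
          binom_weighted_fps h (Suc j) - fps_X * binom_weighted_fps (\<lambda>m. h (Suc m)) (Suc j)"
    using binom_weighted_fps_Suc_diff[of h j] by (simp add: algebra_simps)
  then show ?thesis
    unfolding binom_weighted_fps_shift[OF assms] by (simp add: algebra_simps power2_eq_square)
qed

lemma binom_weighted_fps_ratio:
  fixes h :: "nat \<Rightarrow> 'a::field"
  assumes "h 0 = 1" and "\<And>n. h (Suc n) = a * h n + of_nat n * b * h (n - 1)"
  defines "T \<equiv> \<lambda>j. binom_weighted_fps h (Suc j) * inverse (binom_weighted_fps h j)"
  shows "T j = inverse (1 - fps_const a * fps_X
                         - fps_const (of_nat (Suc j) * b) * fps_X^2 * T (Suc j))"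
proof -
  define E where "E = binom_weighted_fps h"
  have E_inverse: "E k * inverse (E k) = 1" for k
    using assms(1) by (simp add: E_def inverse_mult_eq_1')
  have "1 - fps_const a * fps_X - fps_const (of_nat (Suc j) * b) * fps_X^2 * T (Suc j)
        = ((1 - fps_const a * fps_X) * E (Suc j)
           - fps_const (of_nat (Suc j) * b) * fps_X^2 * E (Suc (Suc j))) * inverse (E (Suc j))"
    unfolding T_def E_def[symmetric] using E_inverse[of "Suc j"] by (simp add: algebra_simps)
  also have "\<dots> = E j * inverse (E (Suc j))"
    unfolding E_def binom_weighted_fps_rec[OF assms(2), symmetric] ..
  finally show ?thesis
    using assms(1) by (simp add: T_def E_def fps_inverse_mult mult.commute)
qed

lemma jfrac_tail_nth_hermite_recurrence:
  fixes h :: "nat \<Rightarrow> 'a::field"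
  assumes "h 0 = 1" and "\<And>n. h (Suc n) = a * h n + of_nat n * b * h (n - 1)" and "m < N"
  shows "jfrac_tail (\<lambda>i. a) (\<lambda>i. of_nat i * b) N (Suc j) $ m =
           (binom_weighted_fps h (Suc j) * inverse (binom_weighted_fps h j)) $ m"
  using assms(3)
proof (induction N arbitrary: j m)
  case 0
  then show ?case by simp
next
  case (Suc N)
  define T where "T = (\<lambda>j. binom_weighted_fps h (Suc j) * inverse (binom_weighted_fps h j))"
  define D where "D = (\<lambda>F. 1 - fps_const a * fps_X - fps_const (of_nat (Suc j) * b) * fps_X^2 * F)"
  have D_nth: "D F $ k = (1 - fps_const a * fps_X) $ k
                 - (if k < 2 then 0 else of_nat (Suc j) * b * F $ (k - 2))" for F k
    unfolding D_def by (simp add: mult.commute[of _ "fps_X^2"] mult.assoc fps_X_power_mult_nth)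
  have "D (jfrac_tail (\<lambda>i. a) (\<lambda>i. of_nat i * b) N (Suc (Suc j))) $ k = D (T (Suc j)) $ k"
    if "k < Suc N" for k
    using that Suc.IH[of "k - 2" "Suc j"] by (simp add: D_nth T_def)
  then have "inverse (D (jfrac_tail (\<lambda>i. a) (\<lambda>i. of_nat i * b) N (Suc (Suc j)))) $ m =
               inverse (D (T (Suc j))) $ m"
    by (rule fps_inverse_nth_cong[rotated]) (use Suc.prems in \<open>simp_all add: D_nth\<close>)
  then show ?case
    using binom_weighted_fps_ratio[OF assms(1,2), of j] by (simp add: D_def T_def)
qed

theorem is_jfrac_hermite_recurrence:
  fixes h :: "nat \<Rightarrow> 'a::field"
  assumes "h 0 = 1" and "\<And>n. h (Suc n) = a * h n + of_nat n * b * h (n - 1)"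
  shows "is_jfrac (\<lambda>i. a) (\<lambda>i. of_nat i * b) (Abs_fps h)"
  unfolding is_jfrac_def jfrac_conv_def
proof (rule tendsto_fpsI)
  fix m
  have "jfrac_tail (\<lambda>i. a) (\<lambda>i. of_nat i * b) N 1 $ m = Abs_fps h $ m" if "m < N" for N
    using jfrac_tail_nth_hermite_recurrence[OF assms that, of 0]
    by (simp add: binom_weighted_fps_0[of h, OF assms(1)] binom_weighted_fps_1)
  then show "eventually (\<lambda>N. jfrac_tail (\<lambda>i. a) (\<lambda>i. of_nat i * b) N 1 $ m = Abs_fps h $ m)
               sequentially"
    by (rule eventually_mono[OF eventually_gt_at_top])
qed

lemma fps_mult_power_nth_eq_0:
  fixes g f :: "'a::comm_semiring_1 fps"
  assumes "f $ 0 = 0" and "n < k"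
  shows "(g * f ^ k) $ n = 0"
  using assms by (simp add: fps_mult_nth startsby_zero_power_prefix)

lemma eRiordan_eq_0:
  assumes "f $ 0 = 0" and "n < k"
  shows "eRiordan g f n k = 0"
  using assms by (simp add: eRiordan_def fps_mult_power_nth_eq_0)

lemma eRiordan_exp_X: "eRiordan (fps_exp 1) fps_X n k = of_nat (n choose k)"
  by (simp add: eRiordan_def fps_X_power_mult_right_nth binomial_fact field_simps)

lemma fps_exp_compose_nth:
  fixes f :: "'a::field_char_0 fps"
  assumes "f $ 0 = 0" and "m \<le> N"
  shows "(fps_exp 1 oo f) $ m = (\<Sum>i\<le>N. fps_const (1 / fact i) * f ^ i) $ m"
proof -
  have "(fps_exp 1 oo f) $ m = (\<Sum>i\<le>m. 1 / fact i * (f ^ i) $ m)"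
    by (simp add: fps_compose_nth atLeast0AtMost)
  also have "\<dots> = (\<Sum>i\<le>N. 1 / fact i * (f ^ i) $ m)"
    by (rule sum.mono_neutral_left)
       (use assms in \<open>auto simp: startsby_zero_power_prefix\<close>)
  finally show ?thesis
    by (simp add: fps_sum_nth)
qed

lemma f_matrix_eRiordan:
  fixes g f :: "'a::field_char_0 fps"
  assumes f0: "f $ 0 = 0"
  shows "f_matrix (eRiordan g f) n k = eRiordan (g * (fps_exp 1 oo f)) f n k"
proof (cases "k \<le> n")
  case False
  then show ?thesis
    using f0 by (auto simp: f_matrix_def ltmat_mult_def eRiordan_exp_X eRiordan_eq_0 binomial_eq_0
                      intro!: sum.neutral)
next
  case True
  define c where "c = (\<lambda>i. fact n / (fact k * fact i) * (g * f ^ (k + i)) $ n :: 'a)"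
  have "f_matrix (eRiordan g f) n k = (\<Sum>j\<le>n. eRiordan g f n j * of_nat (j choose k))"
    by (simp add: f_matrix_def ltmat_mult_def eRiordan_exp_X)
  also have "\<dots> = (\<Sum>j=k..n. c (j - k))"
    by (rule sum.mono_neutral_cong_right)
       (auto simp: c_def eRiordan_def binomial_fact field_simps)
  also have "\<dots> = (\<Sum>i\<le>n - k. c i)"
    using sum.shift_bounds_cl_nat_ivl[of "\<lambda>j. c (j - k)" 0 k "n - k"] True
    by (simp add: atLeast0AtMost)
  also have "\<dots> = (\<Sum>i\<le>n. c i)"
    by (rule sum.mono_neutral_left) (auto simp: c_def intro!: fps_mult_power_nth_eq_0 f0)
  also have "\<dots> = fact n / fact k * (g * f ^ k * (\<Sum>i\<le>n. fps_const (1 / fact i) * f ^ i)) $ n"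
  proof -
    have "g * f ^ k * (\<Sum>i\<le>n. fps_const (1 / fact i) * f ^ i) =
            (\<Sum>i\<le>n. fps_const (1 / fact i) * (g * f ^ (k + i)))"
      by (simp add: sum_distrib_left power_add mult_ac)
    then show ?thesis
      by (simp add: c_def fps_sum_nth sum_distrib_left)
  qed
  also have "\<dots> = fact n / fact k * (g * f ^ k * (fps_exp 1 oo f)) $ n"
    using fps_exp_compose_nth[OF f0, of _ n] by (simp add: fps_mult_nth)
  finally show ?thesis
    by (simp add: eRiordan_def mult_ac)
qed

lemma fact_Suc_mult_nth_conv_deriv:
  fixes F :: "'a::{comm_ring_1,ring_char_0} fps"
  shows "fact (Suc n) * F $ Suc n = fact n * fps_deriv F $ n"
  by simp

lemma fact_times_linear_mult_nth:
  fixes F :: "'a::{comm_ring_1,ring_char_0} fps"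
  shows "fact n * ((fps_const c + fps_const d * fps_X) * F) $ n =
           c * (fact n * F $ n) + of_nat n * d * (fact (n - 1) * F $ (n - 1))"
proof -
  have "(fps_const c + fps_const d * fps_X) * F = fps_const c * F + fps_const d * (fps_X * F)"
    by (simp add: algebra_simps)
  then have "((fps_const c + fps_const d * fps_X) * F) $ n =
               c * F $ n + (if n = 0 then 0 else d * F $ (n - 1))"
    by simp
  then show ?thesis
    by (cases n) (simp_all add: algebra_simps)
qed

lemma eRiordan_conv_nth:
  "eRiordan g f n k = fact n * (fps_const (1 / fact k) * g * f ^ k) $ n"
  by (simp add: eRiordan_def mult.assoc)

lemma fps_deriv_eRiordan_column:
  fixes G f :: "'a::field_char_0 fps"
  assumes "fps_deriv G = P * G"
  shows "fps_deriv (fps_const (1 / fact (Suc k)) * G * f ^ Suc k) =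
           P * (fps_const (1 / fact (Suc k)) * G * f ^ Suc k)
           + fps_deriv f * (fps_const (1 / fact k) * G * f ^ k)"
proof -
  have "fps_deriv (f ^ Suc k) = of_nat (Suc k) * fps_deriv f * f ^ k"
    by (simp only: fps_deriv_power' diff_Suc_1)
  then have "fps_deriv (fps_const (1 / fact (Suc k)) * G * f ^ Suc k) =
               P * (fps_const (1 / fact (Suc k)) * G * f ^ Suc k)
               + fps_deriv f * ((fps_const (1 / fact (Suc k)) * of_nat (Suc k)) * G * f ^ k)"
    using assms by (simp add: algebra_simps)
  also have "fps_const (1 / fact (Suc k)) * of_nat (Suc k) =
               (fps_const (1 / fact (Suc k) * of_nat (Suc k)) :: 'a fps)"
    by (simp only: fps_const_mult fps_of_nat [symmetric])
  also have "1 / fact (Suc k) * of_nat (Suc k) = (1 / fact k :: 'a)"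
    by (simp add: field_simps del: of_nat_Suc)
  finally show ?thesis .
qed

text \<open>At \<open>n = 0\<close> the junk terms at row \<open>n - 1 = 0\<close> are multiplied by \<open>of_nat 0\<close>.\<close>
lemma eRiordan_Suc:
  fixes G f :: "'a::field_char_0 fps"
  assumes dG: "fps_deriv G = (fps_const p + fps_const q * fps_X) * G"
    and df: "fps_deriv f = fps_const u + fps_const v * fps_X"
  shows "eRiordan G f (Suc n) 0 = p * eRiordan G f n 0 + of_nat n * q * eRiordan G f (n - 1) 0"
    and "eRiordan G f (Suc n) (Suc k) =
           p * eRiordan G f n (Suc k) + of_nat n * q * eRiordan G f (n - 1) (Suc k)
           + u * eRiordan G f n k + of_nat n * v * eRiordan G f (n - 1) k"
proof -
  define \<Phi> where "\<Phi> k = fps_const (1 / fact k) * G * f ^ k" for k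
  have entry: "eRiordan G f n k = fact n * \<Phi> k $ n" for n k
    by (simp add: eRiordan_conv_nth \<Phi>_def)
  have "fps_deriv (\<Phi> 0) = (fps_const p + fps_const q * fps_X) * \<Phi> 0"
    by (simp add: \<Phi>_def dG)
  then show "eRiordan G f (Suc n) 0 = p * eRiordan G f n 0 + of_nat n * q * eRiordan G f (n - 1) 0"
    unfolding entry fact_Suc_mult_nth_conv_deriv by (simp only: fact_times_linear_mult_nth)
  have "fps_deriv (\<Phi> (Suc k)) = (fps_const p + fps_const q * fps_X) * \<Phi> (Suc k)
                                  + (fps_const u + fps_const v * fps_X) * \<Phi> k"
    unfolding \<Phi>_def fps_deriv_eRiordan_column[OF dG] df ..
  then show "eRiordan G f (Suc n) (Suc k) =
          p * eRiordan G f n (Suc k) + of_nat n * q * eRiordan G f (n - 1) (Suc k)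
          + u * eRiordan G f n k + of_nat n * v * eRiordan G f (n - 1) k"
    unfolding entry fact_Suc_mult_nth_conv_deriv
    by (simp only: fps_add_nth distrib_left fact_times_linear_mult_nth add_ac)
qed

definition rev_row_poly :: "(nat \<Rightarrow> nat \<Rightarrow> 'a::comm_semiring_1) \<Rightarrow> 'a \<Rightarrow> nat \<Rightarrow> 'a" where
  "rev_row_poly M y n = (\<Sum>k\<le>n. M n k * y ^ (n - k))"

lemma sum_reversal_eq_rev_row_poly:
  "(\<Sum>k\<le>n. reversal M n k * y ^ k) = rev_row_poly M y n"
proof -
  have "(\<Sum>k\<le>n. reversal M n k * y ^ k) = (\<Sum>k\<le>n. M n (n - k) * y ^ k)"
    by (simp add: reversal_def)
  also have "\<dots> = (\<Sum>k\<le>n. M n k * y ^ (n - k))"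
    by (rule sum.reindex_bij_witness[of _ "\<lambda>k. n - k" "\<lambda>k. n - k"]) auto
  finally show ?thesis
    unfolding rev_row_poly_def .
qed

lemma rev_row_poly_padded:
  fixes M :: "nat \<Rightarrow> nat \<Rightarrow> 'a::comm_semiring_1"
  assumes "\<And>k. n < k \<Longrightarrow> M n k = 0"
  shows "(\<Sum>k\<le>n + d. M n k * y ^ (n + d - k)) = y ^ d * rev_row_poly M y n"
proof -
  have "(\<Sum>k\<le>n + d. M n k * y ^ (n + d - k)) = (\<Sum>k\<le>n. M n k * y ^ (n + d - k))"
    by (rule sum.mono_neutral_right) (auto simp: assms)
  also have "\<dots> = (\<Sum>k\<le>n. y ^ d * (M n k * y ^ (n - k)))"
  proof (rule sum.cong)
    fix k
    assume "k \<in> {..n}"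
    then have "n + d - k = d + (n - k)"
      by simp
    then show "M n k * y ^ (n + d - k) = y ^ d * (M n k * y ^ (n - k))"
      by (simp add: power_add mult_ac)
  qed simp
  finally show ?thesis
    by (simp add: rev_row_poly_def sum_distrib_left)
qed

lemma rev_row_poly_Suc:
  fixes M :: "nat \<Rightarrow> nat \<Rightarrow> 'a::comm_semiring_1"
  assumes upper: "\<And>n k. n < k \<Longrightarrow> M n k = 0"
    and rec_0: "\<And>n. M (Suc n) 0 = p * M n 0 + of_nat n * q * M (n - 1) 0"
    and rec_Suc: "\<And>n k. M (Suc n) (Suc k) =
                     p * M n (Suc k) + of_nat n * q * M (n - 1) (Suc k)
                     + u * M n k + of_nat n * v * M (n - 1) k"
  shows "rev_row_poly M y (Suc n) =
           (p * y + u) * rev_row_poly M y n + of_nat n * (q * y^2 + v * y) * rev_row_poly M y (n - 1)"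
proof -
  define S where "S m N = (\<Sum>k\<le>N. M m k * y ^ (N - k))" for m N
  have S_Suc: "S m (Suc N) = M m 0 * y ^ Suc N + (\<Sum>k\<le>N. M m (Suc k) * y ^ (N - k))" for m N
    unfolding S_def sum.atMost_Suc_shift by simp
  have S_pad: "S m (m + d) = y ^ d * rev_row_poly M y m" for m d
    unfolding S_def by (rule rev_row_poly_padded) (use upper in auto)
  have "rev_row_poly M y (Suc n) = S (Suc n) (Suc n)"
    by (simp add: S_def rev_row_poly_def)
  also have "\<dots> = p * S n (Suc n) + of_nat n * q * S (n - 1) (Suc n)
                   + u * S n n + of_nat n * v * S (n - 1) n"
    unfolding S_Suc rec_0 rec_Suc
    by (simp add: S_def sum.distrib sum_distrib_left algebra_simps)
  also have "\<dots> = (p * y + u) * rev_row_poly M y n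
                   + of_nat n * (q * y^2 + v * y) * rev_row_poly M y (n - 1)"
    using S_pad[of n 1] S_pad[of n 0] S_pad[of "n - 1" 2] S_pad[of "n - 1" 1]
    by (cases n) (simp_all add: algebra_simps)
  finally show ?thesis .
qed

theorem proposition3:
  fixes r y :: "'a::field_char_0"
  defines "eF \<equiv> f_matrix (eRiordan (fps_exp 1) (fps_X * (1 + fps_const (r / 2) * fps_X)))"
  shows "is_jfrac (\<lambda>i. 2 * y + 1) (\<lambda>i. of_nat i * r * y * (y + 1))
           (Abs_fps (\<lambda>n. \<Sum>k\<le>n. reversal eF n k * y ^ k))"
proof -
  define f :: "'a fps" where "f = fps_X * (1 + fps_const (r / 2) * fps_X)"
  define G where "G = fps_exp 1 * (fps_exp 1 oo f)"
  have f0: "f $ 0 = 0"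
    by (simp add: f_def)
  have df: "fps_deriv f = fps_const 1 + fps_const r * fps_X"
    by (simp add: f_def algebra_simps fps_numeral_fps_const)
  have dG: "fps_deriv G = (fps_const 2 + fps_const r * fps_X) * G"
    by (simp add: G_def fps_compose_deriv f0 df algebra_simps numeral_fps_const)
  have eF: "eF = eRiordan G f"
    by (simp add: eF_def G_def fun_eq_iff f_matrix_eRiordan f0 flip: f_def)
  have "rev_row_poly eF y (Suc n) = (2 * y + 1) * rev_row_poly eF y n
          + of_nat n * (r * y * (y + 1)) * rev_row_poly eF y (n - 1)" for n
    using rev_row_poly_Suc[of eF 2 r 1 r y n] unfolding eF
    by (simp add: eRiordan_Suc[OF dG df] eRiordan_eq_0[OF f0] algebra_simps power2_eq_square)
  moreover have "rev_row_poly eF y 0 = 1"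
    by (simp add: rev_row_poly_def eF eRiordan_def G_def)
  ultimately have "is_jfrac (\<lambda>i. 2 * y + 1) (\<lambda>i. of_nat i * (r * y * (y + 1)))
                     (Abs_fps (rev_row_poly eF y))"
    by (intro is_jfrac_hermite_recurrence)
  then show ?thesis
    by (simp add: sum_reversal_eq_rev_row_poly mult.assoc)
qed

end
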